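(* In base $B=2$, for every integer $\eta\ge 2$, $$\gamma_2(\eta)=\Bigl(2^{-1}\,2\uparrow\uparrow(\eta-1)\Bigr)^{3}-1,$$ i.e. with $E_1=2^{-1}2^{3}$ and $E_{m+1}=2^{-1}2^{E_m}$ for $m\ge1$, one has $\gamma_2(\eta)=E_{\eta-1}-1$.
   Context: Every integer $x>0$ is written uniquely in base $2$ as $x=\sum_{i} x_i 2^i$ with binary digits $x_i$. Define $\mathcal{H}_2(x)=\sum_{i} x_i^2$, $\mathcal{H}_2^0(x)=x$, $\mathcal{H}_2^n=\mathcal{H}_2\circ\mathcal{H}_2^{n-1}$. A positive integer $x$ is happy if $\mathcal{H}_2^n(x)=1$ for some $n\in\mathbb{N}$; its height is $\eta_2(x)=\min\{\alpha\in\mathbb{N}:\mathcal{H}_2^\alpha(x)=1\}$. For $n\in\mathbb{N}$, $\gamma_2(n)$ denotes the smallest happy number $x\ge1$ with $\eta_2(x)=n$. Adapted up-arrow notation: for reals $k,x,y,z$ and integer $n\ge1$, $k(xy\uparrow\uparrow n)^z=k\,E_n$ where $E_1=x\,y^{z}$ and $E_{m+1}=x\,y^{E_m}$ (the factor "$xy$" is repeated $n$ times in the tower $k\,x y^{x y^{\cdot^{\cdot^{x y^{z}}}}}$); an omitted $k$ means $k=1$. *)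

theory Defs
  imports Complex_Main
begin

text \<open>Binary digit i of x, and the base-2 squared-digit-sum map.
  Digits with index > x vanish since x < 2^(x+1).\<close>
definition bdigit :: "nat \<Rightarrow> nat \<Rightarrow> nat" where
  "bdigit x i = (x div 2 ^ i) mod 2"

definition H2 :: "nat \<Rightarrow> nat" where
  "H2 x = (\<Sum>i\<le>x. (bdigit x i)^2)"

definition happy2 :: "nat \<Rightarrow> bool" where
  "happy2 x \<longleftrightarrow> x > 0 \<and> (\<exists>n. (H2 ^^ n) x = 1)"

definition eta2 :: "nat \<Rightarrow> nat" where
  "eta2 x = (LEAST a. (H2 ^^ a) x = 1)"

definition gamma2 :: "nat \<Rightarrow> nat" where
  "gamma2 n = (LEAST x. x \<ge> 1 \<and> happy2 x \<and> eta2 x = n)"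

text \<open>Adapted up-arrow: k (x y \<up>\<up> n)^z = k * E_n with E_1 = x*y^z,
  E_(m+1) = x*y^(E_m).\<close>
fun tower_E :: "real \<Rightarrow> real \<Rightarrow> real \<Rightarrow> nat \<Rightarrow> real" where
  "tower_E x y z 0 = z"
| "tower_E x y z (Suc m) = x * y powr (tower_E x y z m)"

definition uparrow :: "real \<Rightarrow> real \<Rightarrow> real \<Rightarrow> nat \<Rightarrow> real \<Rightarrow> real" where
  "uparrow k x y n z = k * tower_E x y z n"

end

theory Submission
  imports Defs
begin

text \<open>In base 2 every digit is 0 or 1, so \<open>H2\<close> is the population count. Since a number with
  \<open>k\<close> one-bits is at least \<open>2^k - 1\<close>, with equality for the Mersenne number, and \<open>H2\<close> strictly
  decreases above 1, the least number of height \<open>n + 1\<close> is \<open>2^g - 1\<close> where \<open>g\<close> is the least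
  number of height \<open>n\<close>. Starting from \<open>2\<close> (height 1) this gives \<open>g_(n+1) = 2^(g_n) - 1\<close>,
  which is the tower \<open>E_n - 1\<close>.\<close>

fun popcount :: "nat \<Rightarrow> nat" where
  "popcount x = (if x = 0 then 0 else x mod 2 + popcount (x div 2))"
declare popcount.simps[simp del]

lemma popcount_0[simp]: "popcount 0 = 0"
  by (simp add: popcount.simps)

lemma popcount_pos_eq: "x > 0 \<Longrightarrow> popcount x = x mod 2 + popcount (x div 2)"
  by (subst popcount.simps) simp

lemma sum_bdigit_Suc: "(\<Sum>i<Suc k. bdigit x i) = x mod 2 + (\<Sum>i<k. bdigit (x div 2) i)"
proof -
  have "(\<Sum>i<Suc k. bdigit x i) = bdigit x 0 + (\<Sum>i<k. bdigit x (Suc i))"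
    by (rule sum.lessThan_Suc_shift)
  also have "(\<Sum>i<k. bdigit x (Suc i)) = (\<Sum>i<k. bdigit (x div 2) i)"
    by (intro sum.cong) (auto simp: bdigit_def div_mult2_eq)
  finally show ?thesis by (simp add: bdigit_def)
qed

lemma sum_bdigit_eq_popcount: "x < 2 ^ k \<Longrightarrow> (\<Sum>i<k. bdigit x i) = popcount x"
proof (induction k arbitrary: x)
  case (Suc k)
  have "x div 2 < 2 ^ k" using Suc.prems by auto
  then show ?case using Suc.IH[of "x div 2"] sum_bdigit_Suc[where k=k and x=x]
    by (cases "x = 0") (simp_all add: popcount_pos_eq[of x])
qed simp

lemma H2_eq_popcount: "H2 x = popcount x"
proof -
  have "bdigit x i ^ 2 = bdigit x i" for i
    by (cases "bdigit x i = 0") (auto simp: bdigit_def)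
  hence "H2 x = (\<Sum>i<Suc x. bdigit x i)"
    unfolding H2_def by (simp add: lessThan_Suc_atMost)
  also have "\<dots> = popcount x"
    by (rule sum_bdigit_eq_popcount) (metis less_exp lessI less_trans)
  finally show ?thesis .
qed

lemma popcount_ge_1: "x \<ge> 1 \<Longrightarrow> popcount x \<ge> 1"
proof (induction x rule: less_induct)
  case (less x)
  show ?case
  proof (cases "even x")
    case True
    hence "x div 2 \<ge> 1" "x div 2 < x" using less.prems by auto
    then show ?thesis using less.IH[of "x div 2"] less.prems by (simp add: popcount_pos_eq[of x])
  next
    case False
    then show ?thesis using less.prems by (simp add: popcount_pos_eq[of x] odd_iff_mod_2_eq_one)
  qed
qed

lemma popcount_le: "popcount x \<le> x"
proof (induction x rule: less_induct)
  case (less x)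
  show ?case
  proof (cases "x = 0")
    case False
    hence "popcount (x div 2) \<le> x div 2" using less.IH by simp
    then show ?thesis using False div_mult_mod_eq[of x 2] by (simp add: popcount_pos_eq[of x])
  qed simp
qed

lemma popcount_less: "x \<ge> 2 \<Longrightarrow> popcount x < x"
  using popcount_le[of "x div 2"] popcount_pos_eq[of x] div_mult_mod_eq[of x 2] by linarith

lemma two_power_popcount_le: "2 ^ popcount x \<le> x + 1"
proof (induction x rule: less_induct)
  case (less x)
  show ?case
  proof (cases "x = 0")
    case False
    hence IH: "2 ^ popcount (x div 2) \<le> x div 2 + 1" using less.IH by simp
    have "(2::nat) ^ popcount x = 2 ^ (x mod 2) * 2 ^ popcount (x div 2)"
      using False by (simp add: popcount_pos_eq[of x] power_add)
    also have "\<dots> \<le> 2 ^ (x mod 2) * (x div 2 + 1)"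
      using IH by (intro mult_left_mono) auto
    also have "\<dots> \<le> x + 1"
      by (cases "even x") (auto elim: evenE oddE)
    finally show ?thesis .
  qed simp
qed

lemma popcount_mersenne: "popcount (2 ^ m - 1) = m"
proof (induction m)
  case (Suc m)
  have "(2::nat) ^ Suc m - 1 = 2 * (2 ^ m - 1) + 1"
    using one_le_power[of "2::nat" m] by (simp only: power_Suc) arith
  then show ?case using Suc by (simp add: popcount_pos_eq)
qed simp

lemma H2_iterates_reach_1: "x \<ge> 1 \<Longrightarrow> \<exists>n. (H2 ^^ n) x = 1"
proof (induction x rule: less_induct)
  case (less x)
  show ?case
  proof (cases "x = 1")
    case True
    then show ?thesis by (metis funpow_0)
  next
    case False
    hence "H2 x < x" "H2 x \<ge> 1"
      using less.prems popcount_less popcount_ge_1 by (auto simp: H2_eq_popcount)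
    then obtain n where "(H2 ^^ n) (H2 x) = 1" using less.IH by blast
    then show ?thesis by (metis funpow_Suc_right o_apply)
  qed
qed

lemma happy2_iff: "happy2 x \<longleftrightarrow> x \<ge> 1"
  unfolding happy2_def using H2_iterates_reach_1 by auto

lemma eta2_1: "eta2 1 = 0"
  unfolding eta2_def by simp

lemma eta2_step: "x \<ge> 2 \<Longrightarrow> eta2 x = Suc (eta2 (H2 x))"
proof -
  assume x: "x \<ge> 2"
  obtain n where n: "(H2 ^^ n) x = 1" using H2_iterates_reach_1 x by force
  have "eta2 x = Suc (LEAST m. (H2 ^^ Suc m) x = 1)"
    unfolding eta2_def using n x by (intro Least_Suc) auto
  also have "(\<lambda>m. (H2 ^^ Suc m) x = 1) = (\<lambda>m. (H2 ^^ m) (H2 x) = 1)"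
    by (simp only: funpow_Suc_right o_apply)
  finally show ?thesis unfolding eta2_def by simp
qed

lemma eta2_pos_iff: "x \<ge> 1 \<Longrightarrow> eta2 x > 0 \<longleftrightarrow> x \<ge> 2"
  using eta2_step eta2_1 by (cases "x = 1") auto

text \<open>\<open>least_of_height n\<close> is the least number of height \<open>n + 1\<close>.\<close>

fun least_of_height :: "nat \<Rightarrow> nat" where
  "least_of_height 0 = 2"
| "least_of_height (Suc n) = 2 ^ least_of_height n - 1"

lemma least_of_height_ge_2: "least_of_height n \<ge> 2"
proof (induction n)
  case (Suc n)
  have "(2::nat) ^ 2 \<le> 2 ^ least_of_height n" using Suc by (intro power_increasing) auto
  then show ?case by simp
qed simp

lemma eta2_least_of_height: "eta2 (least_of_height n) = Suc n"
proof (induction n)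
  case 0
  show ?case using eta2_step[of 2] eta2_1 by (simp add: H2_eq_popcount popcount_pos_eq)
next
  case (Suc n)
  have "H2 (least_of_height (Suc n)) = least_of_height n"
    using popcount_mersenne[of "least_of_height n"] by (simp add: H2_eq_popcount)
  then show ?case using eta2_step[OF least_of_height_ge_2[of "Suc n"]] Suc.IH by simp
qed

lemma least_of_height_le: "x \<ge> 1 \<Longrightarrow> eta2 x = Suc n \<Longrightarrow> least_of_height n \<le> x"
proof (induction n arbitrary: x)
  case 0
  then show ?case using eta2_pos_iff[of x] by simp
next
  case (Suc n)
  have "x \<ge> 2" using Suc.prems eta2_pos_iff[of x] by simp
  hence "eta2 (H2 x) = Suc n" using Suc.prems(2) eta2_step by simp
  moreover have "H2 x \<ge> 1" using Suc.prems(1) popcount_ge_1 by (simp add: H2_eq_popcount)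
  ultimately have "least_of_height n \<le> H2 x" using Suc.IH by blast
  hence "(2::nat) ^ least_of_height n \<le> 2 ^ H2 x" by (intro power_increasing) auto
  also have "\<dots> \<le> x + 1" using two_power_popcount_le by (simp add: H2_eq_popcount)
  finally show ?case by simp
qed

lemma gamma2_Suc: "gamma2 (Suc n) = least_of_height n"
  unfolding gamma2_def
proof (rule Least_equality)
  show "1 \<le> least_of_height n \<and> happy2 (least_of_height n) \<and> eta2 (least_of_height n) = Suc n"
    using least_of_height_ge_2[of n] eta2_least_of_height happy2_iff by auto
qed (use least_of_height_le in blast)

lemma tower_E_eq_least_of_height: "tower_E (1/2) 2 3 n = real (least_of_height n) + 1"
proof (induction n)
  case (Suc n)
  have "tower_E (1/2) 2 3 (Suc n) = 1/2 * 2 powr real (least_of_height n + 1)"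
    using Suc by (simp add: add.commute)
  also have "\<dots> = 1/2 * 2 ^ (least_of_height n + 1)"
    by (subst powr_realpow[symmetric]) auto
  also have "\<dots> = 2 ^ least_of_height n"
    by simp
  also have "\<dots> = real (least_of_height (Suc n)) + 1"
    using one_le_power[of "2::nat" "least_of_height n"] by (simp add: of_nat_diff)
  finally show ?case .
qed simp

theorem mainTheorem11:
  fixes \<eta> :: nat
  assumes "\<eta> \<ge> 2"
  shows "happy2 (gamma2 \<eta>) \<and> eta2 (gamma2 \<eta>) = \<eta> \<and>
         real (gamma2 \<eta>) = uparrow 1 (1/2) 2 (\<eta> - 1) 3 - 1"
proof -
  obtain n where \<eta>: "\<eta> = Suc n" using assms by (cases \<eta>) auto
  have "gamma2 \<eta> = least_of_height n" using gamma2_Suc \<eta> by simp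
  moreover have "uparrow 1 (1/2) 2 (\<eta> - 1) 3 = real (least_of_height n) + 1"
    unfolding uparrow_def \<eta> by (simp add: tower_E_eq_least_of_height)
  ultimately show ?thesis
    using \<eta> eta2_least_of_height least_of_height_ge_2[of n] happy2_iff by simp
qed

end
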